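(* Let $S\subseteq\mathbb{R}$ and let $(X_t)_{t\ge 0}$ be a stochastic process on $S$, adapted to a filtration $(\mathcal{F}_t)_{t\ge 0}$. Let $h\colon S\to\mathbb{R}^{\ge 0}$ be a convex and greed-admitting function such that for all $t\ge 0$ the drift condition \[ \mathbb{E}[X_t-X_{t+1}\mid \mathcal{F}_t]\ \ge\ h(X_t) \] holds (equivalently, $\mathbb{E}[X_{t+1}\mid\mathcal{F}_t]\le \tilde h(X_t)$, where $\tilde h(x)=x-h(x)$). Then for all $t\ge 0$, \[ \mathbb{E}[X_t\mid \mathcal{F}_0]\ \le\ \tilde h^t(X_0) \qquad\text{and}\qquad \mathbb{E}[X_t]\ \le\ \tilde h^t(\mathbb{E}[X_0]). \]
   Context: A function $h\colon S\to\mathbb{R}$ is called greed-admitting if the function $x\mapsto x-h(x)$ is monotone non-decreasing on $S$. For a function $f$ and $i\ge 0$, $f^i$ denotes the $i$-fold self-composition of $f$ ($f^0$ is the identity). Here $\tilde h(x)=x-h(x)$, and its iterates are taken as in the paper (the iterates of $\tilde h$ are assumed to be defined). *)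

theory Defs
  imports "HOL-Analysis.Analysis" "HOL-Probability.Probability"
begin

definition greed_admitting :: "real set \<Rightarrow> (real \<Rightarrow> real) \<Rightarrow> bool" where
  "greed_admitting S h \<longleftrightarrow> mono_on S (\<lambda>x. x - h x)"

end

theory Submission
  imports Defs
begin

text \<open>Write g x = x - h x. The hypotheses make g concave, monotone, deflationary (g x \<le> x) and a
  self-map of S, and the drift condition says E[X(t+1) | F t] \<le> g (X t). By the tower property,
  monotonicity of conditional expectation and the conditional Jensen inequality for the concave g,
  E[X(t+1) | F 0] \<le> E[g (X t) | F 0] \<le> g (E[X t | F 0]), so induction on t together with the
  monotonicity of g gives the first bound; the bound on E[X t] is the same argument with plain
  expectations. Jensen's inequality is proved with supporting lines whose slopes are the right
  derivatives of g; these are finite even at a left end point of S because g is deflationary and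
  maps S into itself.\<close>

lemma (in prob_space) integral_in_interval:
  fixes Y :: "'a \<Rightarrow> real"
  assumes Y: "integrable M Y" "AE \<omega> in M. Y \<omega> \<in> S" and S: "is_interval S"
  shows "(\<integral>\<omega>. Y \<omega> \<partial>M) \<in> S"
proof -
  let ?E = "\<integral>\<omega>. Y \<omega> \<partial>M"
  have "\<exists>\<omega>\<in>space M. Y \<omega> \<in> S \<and> Y \<omega> \<le> ?E"
  proof (rule ccontr)
    assume none: "\<not> ?thesis"
    from Y(2) AE_space have "AE \<omega> in M. ?E < Y \<omega>"
      by eventually_elim (use none in auto)
    then have "?E < ?E" by (rule expectation_greater[OF Y(1)])
    then show False by simp
  qed
  moreover have "\<exists>\<omega>\<in>space M. Y \<omega> \<in> S \<and> ?E \<le> Y \<omega>"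
  proof (rule ccontr)
    assume none: "\<not> ?thesis"
    from Y(2) AE_space have "AE \<omega> in M. Y \<omega> < ?E"
      by eventually_elim (use none in auto)
    then have "?E < ?E" by (rule expectation_less[OF Y(1)])
    then show False by simp
  qed
  ultimately show ?thesis
    using S unfolding is_interval_1 by blast
qed

lemma (in prob_space) sigma_finite_subalgebra_of_subalgebra:
  "subalgebra M F \<Longrightarrow> sigma_finite_subalgebra M F"
  by (intro finite_measure_subalgebra_is_sigma_finite)
     (simp add: finite_measure_subalgebra_def finite_measure_subalgebra_axioms_def)

context sigma_finite_subalgebra
begin

lemma real_cond_exp_in_interval:
  assumes X: "integrable M X" "AE x in M. X x \<in> S" and S: "is_interval S"
  shows "AE x in M. real_cond_exp M F X x \<in> S"
proof -
  obtain a b :: real where "S = {} \<or> S = UNIV \<or> S = {..<b} \<or> S = {..b} \<or> S = {a<..} \<or> S = {a..} \<or>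
      S = {a<..<b} \<or> S = {a<..b} \<or> S = {a..<b} \<or> S = {a..b}"
    using is_real_interval[OF S] by blast
  then show ?thesis
    unfolding greaterThanLessThan_eq greaterThanAtMost_def atLeastLessThan_def atLeastAtMost_def
    by (elim disjE) (use X(2) in \<open>simp_all add: real_cond_exp_gr_c[OF X(1)] real_cond_exp_ge_c[OF X(1)]
        real_cond_exp_less_c[OF X(1)] real_cond_exp_le_c[OF X(1)]\<close>)
qed

lemma real_cond_exp_mult_centered:
  assumes [measurable]: "Z \<in> borel_measurable F" and X: "integrable M X"
    and ZX: "integrable M (\<lambda>x. Z x * (X x - real_cond_exp M F X x))"
  shows "AE x in M. real_cond_exp M F (\<lambda>x. Z x * (X x - real_cond_exp M F X x)) x = 0"
proof -
  have [measurable]: "X \<in> borel_measurable M" using X by simp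
  have "AE x in M. real_cond_exp M F (\<lambda>x. Z x * (X x - real_cond_exp M F X x)) x
      = Z x * real_cond_exp M F (\<lambda>x. X x - real_cond_exp M F X x) x"
    by (rule real_cond_exp_mult) (auto simp: ZX)
  moreover have "AE x in M. real_cond_exp M F (\<lambda>x. X x - real_cond_exp M F X x) x
      = real_cond_exp M F X x - real_cond_exp M F (real_cond_exp M F X) x"
    by (rule real_cond_exp_diff) (auto intro: X)
  moreover have "AE x in M. real_cond_exp M F (real_cond_exp M F X) x = real_cond_exp M F X x"
    by (rule real_cond_exp_F_meas) (auto intro: X)
  ultimately show ?thesis by eventually_elim simp
qed

lemma obtain_taming_weight:
  fixes U V :: "'a \<Rightarrow> real"
  assumes [measurable]: "U \<in> borel_measurable F" "V \<in> borel_measurable F"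
  obtains w where "w \<in> borel_measurable F" "\<And>x. 0 < w x" "\<And>x. w x \<le> 1"
    "\<And>x. \<bar>w x * U x\<bar> \<le> 1" "integrable M (\<lambda>x. w x * V x)"
proof -
  obtain f :: "'a \<Rightarrow> real" where f_meas: "f \<in> borel_measurable (restr_to_subalg M F)"
    and f_int: "integrable (restr_to_subalg M F) f" and f: "\<And>x. 0 < f x" "\<And>x. f x \<le> 1"
    using sigma_finite_measure.obtain_positive_integrable_function[OF sigma_fin_subalg] by metis
  have [measurable]: "f \<in> borel_measurable F" using f_meas by (simp add: subalg)
  define w where "w x = f x / (1 + \<bar>U x\<bar> + \<bar>V x\<bar>)" for x
  have "w \<in> borel_measurable F" unfolding w_def by measurable
  moreover have "0 < w x" "w x \<le> 1" for x
    using f[of x] by (auto simp: w_def field_simps)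
  moreover have "\<bar>w x * U x\<bar> \<le> 1" for x
    using f[of x] mult_left_le_one_le[of "\<bar>U x\<bar>" "f x"] by (simp add: w_def abs_mult field_simps)
  moreover have "integrable M (\<lambda>x. w x * V x)"
  proof (rule integrable_from_subalg[OF subalg], rule Bochner_Integration.integrable_bound[OF f_int])
    have "\<bar>w x * V x\<bar> \<le> f x" for x
      using f[of x] mult_left_mono[of "\<bar>V x\<bar>" "1 + \<bar>U x\<bar> + \<bar>V x\<bar>" "f x"]
      by (simp add: w_def abs_mult field_simps)
    then show "AE x in restr_to_subalg M F. norm (w x * V x) \<le> norm (f x)"
      using f by (auto intro!: order.trans[OF _ abs_ge_self])
  qed (simp add: subalg w_def)
  ultimately show ?thesis by (rule that)
qed

lemma real_cond_exp_concave_jensen: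
  fixes q psi :: "real \<Rightarrow> real"
  assumes X: "integrable M X" "AE x in M. X x \<in> I" and I: "is_interval I"
    and q: "integrable M (\<lambda>x. q (X x))" "q \<in> borel_measurable borel"
    and psi: "psi \<in> borel_measurable borel"
    and support: "\<And>m y. m \<in> I \<Longrightarrow> y \<in> I \<Longrightarrow> q y \<le> q m + psi m * (y - m)"
  shows "AE x in M. real_cond_exp M F (\<lambda>x. q (X x)) x \<le> q (real_cond_exp M F X x)"
proof -
  define Y where "Y = real_cond_exp M F X"
  have [measurable]: "X \<in> borel_measurable M" "Y \<in> borel_measurable F"
    "q \<in> borel_measurable borel" "psi \<in> borel_measurable borel"
    using X q psi by (simp_all add: Y_def)
  \<comment> \<open>The weight makes q(Y) and psi(Y) integrable; being positive and F-measurable, it is divided out at the end.\<close>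
  obtain w where [measurable]: "w \<in> borel_measurable F" and w_pos: "\<And>x. 0 < w x"
    and w_le_1: "\<And>x. w x \<le> 1" and w_psi: "\<And>x. \<bar>w x * psi (Y x)\<bar> \<le> 1"
    and int_qY: "integrable M (\<lambda>x. w x * q (Y x))"
    by (rule obtain_taming_weight[of "\<lambda>x. psi (Y x)" "\<lambda>x. q (Y x)"]) simp_all
  have [measurable]: "w \<in> borel_measurable M" "Y \<in> borel_measurable M"
    by (rule measurable_from_subalg[OF subalg], measurable)+
  have int_Y: "integrable M Y" unfolding Y_def by (rule real_cond_exp_int(1)[OF X(1)])
  have int_slope: "integrable M (\<lambda>x. w x * psi (Y x) * (X x - Y x))"
    by (rule Bochner_Integration.integrable_bound[of _ "\<lambda>x. X x - Y x"])
       (use X(1) int_Y w_psi in \<open>auto simp: abs_mult intro!: mult_left_le_one_le\<close>)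
  have int_qX: "integrable M (\<lambda>x. w x * q (X x))"
    by (rule Bochner_Integration.integrable_bound[OF q(1)])
       (use w_pos w_le_1 in \<open>auto simp: abs_mult less_imp_le intro!: mult_left_le_one_le\<close>)
  have "AE x in M. w x * q (X x) \<le> w x * q (Y x) + w x * psi (Y x) * (X x - Y x)"
    using X(2) real_cond_exp_in_interval[OF X I]
  proof eventually_elim
    case (elim x)
    then have "q (X x) \<le> q (Y x) + psi (Y x) * (X x - Y x)"
      using support by (simp add: Y_def)
    from mult_left_mono[OF this less_imp_le[OF w_pos]] show ?case
      by (simp add: algebra_simps)
  qed
  then have "AE x in M. real_cond_exp M F (\<lambda>x. w x * q (X x)) x
      \<le> real_cond_exp M F (\<lambda>x. w x * q (Y x) + w x * psi (Y x) * (X x - Y x)) x"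
    by (rule real_cond_exp_mono) (auto intro: int_qX int_qY int_slope)
  moreover have "AE x in M. real_cond_exp M F (\<lambda>x. w x * q (X x)) x
      = w x * real_cond_exp M F (\<lambda>x. q (X x)) x"
    by (rule real_cond_exp_mult) (auto simp: int_qX)
  moreover have "AE x in M. real_cond_exp M F (\<lambda>x. w x * q (Y x) + w x * psi (Y x) * (X x - Y x)) x
      = real_cond_exp M F (\<lambda>x. w x * q (Y x)) x + real_cond_exp M F (\<lambda>x. w x * psi (Y x) * (X x - Y x)) x"
    by (rule real_cond_exp_add[OF int_qY int_slope])
  moreover have "AE x in M. real_cond_exp M F (\<lambda>x. w x * q (Y x)) x = w x * q (Y x)"
    by (rule real_cond_exp_F_meas[OF int_qY]) measurable
  moreover have "AE x in M. real_cond_exp M F (\<lambda>x. w x * psi (Y x) * (X x - Y x)) x = 0"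
    using real_cond_exp_mult_centered[of "\<lambda>x. w x * psi (Y x)" X] int_slope X(1) by (simp add: Y_def)
  ultimately have "AE x in M. w x * real_cond_exp M F (\<lambda>x. q (X x)) x \<le> w x * q (Y x)"
    by eventually_elim simp
  then show ?thesis
    by eventually_elim (use w_pos in \<open>simp add: Y_def\<close>)
qed

lemma real_cond_exp_diff_F_meas:
  assumes "integrable M f" "f \<in> borel_measurable F" "integrable M g"
  shows "AE x in M. real_cond_exp M F (\<lambda>x. f x - g x) x = f x - real_cond_exp M F g x"
  using real_cond_exp_diff[OF assms(1,3)] real_cond_exp_F_meas[OF assms(1,2)]
  by eventually_elim simp

end

text \<open>The right derivative of a concave g at m, as a supremum of chord slopes; the inserted 0 only
  matters at a right end point m of S, where there are no chords.\<close>
definition right_slope :: "real set \<Rightarrow> (real \<Rightarrow> real) \<Rightarrow> real \<Rightarrow> real" where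
  "right_slope S g m = Sup (insert 0 {(g t - g m) / (t - m) | t. t \<in> S \<and> m < t})"

locale mono_concave_deflationary =
  fixes S :: "real set" and g :: "real \<Rightarrow> real"
  assumes concave: "concave_on S g" and mono: "mono_on S g"
    and deflationary: "\<And>x. x \<in> S \<Longrightarrow> g x \<le> x"
    and maps_into: "\<And>x. x \<in> S \<Longrightarrow> g x \<in> S"
begin

lemma is_interval_S: "is_interval S"
  using concave_on_imp_convex[OF concave] by (simp add: is_interval_convex_1)

lemma funpow_in_S: "x \<in> S \<Longrightarrow> (g ^^ n) x \<in> S"
  by (induction n) (simp_all add: maps_into)

lemma chord_slope_nonneg: "y \<in> S \<Longrightarrow> m \<in> S \<Longrightarrow> y < m \<Longrightarrow> 0 \<le> (g m - g y) / (m - y)"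
  using mono by (simp add: monotone_on_def)

lemma chord_slope_antimono:
  assumes "y \<in> S" "t \<in> S" "y < m" "m < t"
  shows "(g t - g m) / (t - m) \<le> (g m - g y) / (m - y)"
proof -
  have "(g m - g y) / (y - m) = - ((g m - g y) / (m - y))"
    "(g t - g m) / (m - t) = - ((g t - g m) / (t - m))"
    by (simp_all add: divide_minus_right[symmetric])
  then show ?thesis
    using convex_on_slope_le[OF concave[unfolded concave_on_def] assms] by simp
qed

lemma bdd_above_chord_slopes:
  assumes "m \<in> S"
  shows "bdd_above (insert 0 {(g t - g m) / (t - m) | t. t \<in> S \<and> m < t})"
proof (cases "\<exists>y\<in>S. y < m")
  case True
  then obtain y where "y \<in> S" "y < m" by blast
  then show ?thesis
    using chord_slope_antimono chord_slope_nonneg assms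
    by (intro bdd_aboveI[of _ "(g m - g y) / (m - y)"]) auto
next
  case False
  \<comment> \<open>At the left end point m of S, g m \<in> S forces g m = m, so the chords have slope at most 1.\<close>
  then have "m \<le> g m" using maps_into[OF assms] by force
  then have "(g t - g m) / (t - m) \<le> 1" if "t \<in> S" "m < t" for t
    using deflationary[OF \<open>t \<in> S\<close>] \<open>m < t\<close> by (simp add: divide_simps)
  then show ?thesis by (intro bdd_aboveI[of _ 1]) auto
qed

lemma chord_slope_le_right_slope:
  "m \<in> S \<Longrightarrow> t \<in> S \<Longrightarrow> m < t \<Longrightarrow> (g t - g m) / (t - m) \<le> right_slope S g m"
  unfolding right_slope_def by (rule cSup_upper[OF _ bdd_above_chord_slopes]) auto

lemma right_slope_le_chord_slope:
  "m \<in> S \<Longrightarrow> y \<in> S \<Longrightarrow> y < m \<Longrightarrow> right_slope S g m \<le> (g m - g y) / (m - y)"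
  unfolding right_slope_def
  by (rule cSup_least) (auto intro: chord_slope_antimono chord_slope_nonneg)

lemma supporting_line:
  assumes "m \<in> S" "y \<in> S"
  shows "g y \<le> g m + right_slope S g m * (y - m)"
proof (cases y m rule: linorder_cases)
  case less
  with right_slope_le_chord_slope[OF assms less] show ?thesis
    by (simp add: field_simps)
next
  case greater
  with chord_slope_le_right_slope[OF assms greater] show ?thesis
    by (simp add: field_simps)
qed simp

lemma right_slope_antimono:
  "x \<in> S \<Longrightarrow> y \<in> S \<Longrightarrow> x \<le> y \<Longrightarrow> right_slope S g y \<le> right_slope S g x"
  using right_slope_le_chord_slope[of y x] chord_slope_le_right_slope[of x y]
  by (cases "x = y") force+

lemma borel_measurable_extension:
  "(\<lambda>x. if x \<in> S then g x else 0) \<in> borel_measurable borel"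
  using real_interval_borel_measurable[OF is_interval_S] mono
  by (intro borel_measurable_piecewise_mono[of "{S, - S}"]) (auto simp: monotone_on_def)

lemma borel_measurable_right_slope_extension:
  "(\<lambda>x. if x \<in> S then right_slope S g x else 0) \<in> borel_measurable borel"
proof -
  have "(\<lambda>x. - (if x \<in> S then right_slope S g x else 0)) \<in> borel_measurable borel"
    using real_interval_borel_measurable[OF is_interval_S] right_slope_antimono
    by (intro borel_measurable_piecewise_mono[of "{S, - S}"]) (auto simp: monotone_on_def)
  then show ?thesis by simp
qed

lemma integral_comp_le:
  assumes "prob_space M" and Y: "integrable M Y" "\<And>\<omega>. \<omega> \<in> space M \<Longrightarrow> Y \<omega> \<in> S"
    and gY: "integrable M (\<lambda>\<omega>. g (Y \<omega>))"
  shows "(\<integral>\<omega>. g (Y \<omega>) \<partial>M) \<le> g (\<integral>\<omega>. Y \<omega> \<partial>M)"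
proof -
  interpret prob_space M by fact
  let ?m = "\<integral>\<omega>. Y \<omega> \<partial>M"
  have m: "?m \<in> S" by (rule integral_in_interval[OF Y(1) _ is_interval_S]) (simp add: Y(2))
  have "(\<integral>\<omega>. g (Y \<omega>) \<partial>M) \<le> (\<integral>\<omega>. g ?m + right_slope S g ?m * (Y \<omega> - ?m) \<partial>M)"
    by (rule integral_mono[OF gY]) (auto simp: Y supporting_line[OF m])
  also have "\<dots> = g ?m"
    using Y(1) by (simp add: prob_space algebra_simps)
  finally show ?thesis .
qed

end

locale concave_drift = prob_space M + mono_concave_deflationary S g
  for M :: "'a measure" and S g +
  fixes F :: "nat \<Rightarrow> 'a measure" and X :: "nat \<Rightarrow> 'a \<Rightarrow> real"
  assumes filt_sub: "\<And>t. subalgebra M (F t)"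
    and filt_mono: "\<And>s t. s \<le> t \<Longrightarrow> subalgebra (F t) (F s)"
    and adapted: "\<And>t. X t \<in> borel_measurable (F t)"
    and integrable_X: "\<And>t. integrable M (X t)"
    and values_in_S: "\<And>t \<omega>. \<omega> \<in> space M \<Longrightarrow> X t \<omega> \<in> S"
    and drift_step: "\<And>t. AE \<omega> in M. real_cond_exp M (F t) (X (Suc t)) \<omega> \<le> g (X t \<omega>)"
begin

lemma sigma_finite_filtration: "sigma_finite_subalgebra M (F t)"
  by (rule sigma_finite_subalgebra_of_subalgebra[OF filt_sub])

lemma g_X_eq_extension:
  "\<omega> \<in> space M \<Longrightarrow> g (X t \<omega>) = (if X t \<omega> \<in> S then g (X t \<omega>) else 0)"
  using values_in_S by simp

lemma borel_measurable_g_X: "(\<lambda>\<omega>. g (X t \<omega>)) \<in> borel_measurable M"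
proof -
  have "(\<lambda>\<omega>. (\<lambda>x. if x \<in> S then g x else 0) (X t \<omega>)) \<in> borel_measurable M"
    using borel_measurable_extension integrable_X by measurable
  then show ?thesis by (subst measurable_cong[OF g_X_eq_extension])
qed

lemma integrable_g_X: "integrable M (\<lambda>\<omega>. g (X t \<omega>))"
proof (rule Bochner_Integration.integrable_bound[OF _ borel_measurable_g_X])
  let ?E = "real_cond_exp M (F t) (X (Suc t))"
  show "integrable M (\<lambda>\<omega>. \<bar>X t \<omega>\<bar> + \<bar>?E \<omega>\<bar>)"
    using sigma_finite_subalgebra.real_cond_exp_int(1)[OF sigma_finite_filtration integrable_X]
    by (simp add: integrable_X)
  from drift_step[of t] AE_space show "AE \<omega> in M. norm (g (X t \<omega>)) \<le> norm (\<bar>X t \<omega>\<bar> + \<bar>?E \<omega>\<bar>)"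
    by eventually_elim (use deflationary[OF values_in_S, of _ t] in fastforce)
qed

lemma cond_exp_g_X_le:
  "AE \<omega> in M. real_cond_exp M (F s) (\<lambda>\<omega>. g (X t \<omega>)) \<omega> \<le> g (real_cond_exp M (F s) (X t) \<omega>)"
proof -
  interpret sigma_finite_subalgebra M "F s" by (rule sigma_finite_filtration)
  let ?g = "\<lambda>x. if x \<in> S then g x else 0"
  have in_S: "AE \<omega> in M. real_cond_exp M (F s) (X t) \<omega> \<in> S"
    by (rule real_cond_exp_in_interval[OF integrable_X _ is_interval_S]) (simp add: values_in_S)
  have "AE \<omega> in M. real_cond_exp M (F s) (\<lambda>\<omega>. ?g (X t \<omega>)) \<omega> \<le> ?g (real_cond_exp M (F s) (X t) \<omega>)"
  proof (rule real_cond_exp_concave_jensen[OF integrable_X _ is_interval_S _ borel_measurable_extension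
        borel_measurable_right_slope_extension])
    show "integrable M (\<lambda>\<omega>. ?g (X t \<omega>))"
      by (rule Bochner_Integration.integrable_cong[THEN iffD1, OF refl _ integrable_g_X])
         (simp add: values_in_S)
    show "?g y \<le> ?g m + (if m \<in> S then right_slope S g m else 0) * (y - m)" if "m \<in> S" "y \<in> S" for m y
      using supporting_line[OF that] that by simp
  qed (simp add: values_in_S)
  moreover have "AE \<omega> in M. real_cond_exp M (F s) (\<lambda>\<omega>. ?g (X t \<omega>)) \<omega> = real_cond_exp M (F s) (\<lambda>\<omega>. g (X t \<omega>)) \<omega>"
    by (rule real_cond_exp_cong)
       (use borel_measurable_g_X in \<open>auto simp: values_in_S measurable_cong[OF g_X_eq_extension]\<close>)
  ultimately show ?thesis using in_S by eventually_elim simp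
qed

lemma cond_exp_le_funpow: "AE \<omega> in M. real_cond_exp M (F 0) (X t) \<omega> \<le> (g ^^ t) (X 0 \<omega>)"
proof (induction t)
  case 0
  show ?case
    using sigma_finite_subalgebra.real_cond_exp_F_meas[OF sigma_finite_filtration integrable_X[of 0] adapted]
    by eventually_elim simp
next
  case (Suc t)
  interpret sigma_finite_subalgebra M "F 0" by (rule sigma_finite_filtration)
  have tower: "AE \<omega> in M. real_cond_exp M (F 0) (real_cond_exp M (F t) (X (Suc t))) \<omega>
      = real_cond_exp M (F 0) (X (Suc t)) \<omega>"
    by (rule real_cond_exp_nested_subalg) (simp_all add: filt_sub filt_mono integrable_X)
  have step: "AE \<omega> in M. real_cond_exp M (F 0) (real_cond_exp M (F t) (X (Suc t))) \<omega>
      \<le> real_cond_exp M (F 0) (\<lambda>\<omega>. g (X t \<omega>)) \<omega>"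
    by (rule real_cond_exp_mono[OF drift_step]) (simp_all add: integrable_g_X
        sigma_finite_subalgebra.real_cond_exp_int(1)[OF sigma_finite_filtration integrable_X])
  have in_S: "AE \<omega> in M. real_cond_exp M (F 0) (X t) \<omega> \<in> S"
    by (rule real_cond_exp_in_interval[OF integrable_X _ is_interval_S]) (simp add: values_in_S)
  from tower step cond_exp_g_X_le[of 0 t] in_S Suc.IH AE_space show ?case
  proof eventually_elim
    case (elim \<omega>)
    then have "g (real_cond_exp M (F 0) (X t) \<omega>) \<le> g ((g ^^ t) (X 0 \<omega>))"
      using mono funpow_in_S[OF values_in_S] by (auto simp: monotone_on_def)
    with elim show ?case by simp
  qed
qed

lemma integral_le_funpow: "(\<integral>\<omega>. X t \<omega> \<partial>M) \<le> (g ^^ t) (\<integral>\<omega>. X 0 \<omega> \<partial>M)"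
proof (induction t)
  case (Suc t)
  have in_S: "(\<integral>\<omega>. X t \<omega> \<partial>M) \<in> S" for t
    by (rule integral_in_interval[OF integrable_X _ is_interval_S]) (simp add: values_in_S)
  have "(\<integral>\<omega>. X (Suc t) \<omega> \<partial>M) = (\<integral>\<omega>. real_cond_exp M (F t) (X (Suc t)) \<omega> \<partial>M)"
    using sigma_finite_subalgebra.real_cond_exp_int(2)[OF sigma_finite_filtration integrable_X] by simp
  also have "\<dots> \<le> (\<integral>\<omega>. g (X t \<omega>) \<partial>M)"
    by (rule integral_mono_AE[OF _ integrable_g_X drift_step])
       (rule sigma_finite_subalgebra.real_cond_exp_int(1)[OF sigma_finite_filtration integrable_X])
  also have "\<dots> \<le> g (\<integral>\<omega>. X t \<omega> \<partial>M)"
    by (rule integral_comp_le[OF prob_space_axioms integrable_X values_in_S integrable_g_X])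
  also have "\<dots> \<le> g ((g ^^ t) (\<integral>\<omega>. X 0 \<omega> \<partial>M))"
    using mono in_S Suc.IH funpow_in_S[OF in_S] by (auto simp: monotone_on_def)
  finally show ?case by simp
qed simp

end

theorem theorem4:
  fixes M :: "'a measure" and F :: "nat \<Rightarrow> 'a measure"
    and X :: "nat \<Rightarrow> 'a \<Rightarrow> real" and S :: "real set" and h :: "real \<Rightarrow> real"
  assumes "prob_space M"
    and filt_sub: "\<And>t. subalgebra M (F t)"
    and filt_mono: "\<And>s t. s \<le> t \<Longrightarrow> subalgebra (F t) (F s)"
    and adapted: "\<And>t. X t \<in> borel_measurable (F t)"
    and integrable: "\<And>t. integrable M (X t)"
    and values_in_S: "\<And>t \<omega>. \<omega> \<in> space M \<Longrightarrow> X t \<omega> \<in> S"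
    and h_nonneg: "\<And>x. x \<in> S \<Longrightarrow> h x \<ge> 0"
    and h_convex: "convex_on S h"
    and h_greedy: "greed_admitting S h"
    and iterates_defined: "\<And>x. x \<in> S \<Longrightarrow> x - h x \<in> S"
    and drift: "\<And>t. AE \<omega> in M.
       real_cond_exp M (F t) (\<lambda>\<omega>. X t \<omega> - X (Suc t) \<omega>) \<omega> \<ge> h (X t \<omega>)"
  shows "\<forall>t. (AE \<omega> in M. real_cond_exp M (F 0) (X t) \<omega> \<le> ((\<lambda>x. x - h x) ^^ t) (X 0 \<omega>))
           \<and> (\<integral>\<omega>. X t \<omega> \<partial>M) \<le> ((\<lambda>x. x - h x) ^^ t) (\<integral>\<omega>. X 0 \<omega> \<partial>M)"
proof -
  have drift_step: "AE \<omega> in M. real_cond_exp M (F t) (X (Suc t)) \<omega> \<le> X t \<omega> - h (X t \<omega>)" for t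
  proof -
    interpret sigma_finite_subalgebra M "F t"
      by (rule prob_space.sigma_finite_subalgebra_of_subalgebra[OF assms(1) filt_sub])
    from drift[of t] real_cond_exp_diff_F_meas[OF integrable adapted integrable[of "Suc t"]]
    show ?thesis by eventually_elim simp
  qed
  have "concave_on S (\<lambda>x. x - h x)"
    using h_convex by (intro concave_on_diff) (simp_all add: concave_on_ident convex_on_imp_convex)
  then interpret concave_drift M S "\<lambda>x. x - h x" F X
    using assms(1) h_greedy h_nonneg iterates_defined filt_sub filt_mono adapted integrable values_in_S drift_step
    by (intro concave_drift.intro mono_concave_deflationary.intro concave_drift_axioms.intro)
       (simp_all add: greed_admitting_def)
  show ?thesis
    using cond_exp_le_funpow integral_le_funpow by blast
qed

end
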